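(* Let $\Omega\subset\mathbb{R}^2$ be open, $\lambda>0$, and let $u\in L^2(\Omega)$ satisfy $-\Delta u=\lambda u$ in $\Omega$. Let $\mathbf{x}_0\in\Omega$, $h>0$, $\alpha\in(0,1)$, and let $\mathbf{e}^-,\mathbf{e}^+$ be unit vectors with angle $\alpha\pi$ from $\mathbf{e}^-$ to $\mathbf{e}^+$; put $\Gamma^\pm=\{\mathbf{x}_0+t\mathbf{e}^\pm:0\le t\le h\}\subset\Omega$. Suppose $\Gamma^+$ is a singular line of $u$ ($\partial_\nu u=0$ on $\Gamma^+$) and $\Gamma^-$ is a generalized singular line of $u$ with constant parameter $\eta_1\equiv C_1\neq0$. Let $n\in\mathbb{N}$, $n\ge3$. If $u(\mathbf{x}_0)=0$ and $\alpha\neq q/p$ for all integers $1\le q<p\le n-1$, then $u$ vanishes up to the order $n$ at $\mathbf{x}_0$, i.e. all partial derivatives of $u$ of order at most $n-1$ vanish at $\mathbf{x}_0$.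
   Context: No boundary condition is imposed on $\partial\Omega$; $u$ is real-analytic in $\Omega$. $\nu$ denotes a unit normal to the segment in question. A generalized singular line with parameter $\eta$ is a segment on which $\partial_\nu u+\eta u=0$. "Vanishes up to order $n$" means every homogeneous term of degree $<n$ in the Taylor expansion of $u$ at $\mathbf{x}_0$ vanishes. *)

theory Defs
  imports "HOL-Analysis.Analysis"
begin

definition dirderiv :: "real^2 \<Rightarrow> (real^2 \<Rightarrow> real) \<Rightarrow> real^2 \<Rightarrow> real" where
  "dirderiv v f x = deriv (\<lambda>t. f (x + t *\<^sub>R v)) 0"

fun iderv :: "(real^2) list \<Rightarrow> (real^2 \<Rightarrow> real) \<Rightarrow> real^2 \<Rightarrow> real" where
  "iderv [] f = f"
| "iderv (v # vs) f = dirderiv v (iderv vs f)"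

definition coord_dirs :: "(real^2) set" where
  "coord_dirs = {axis 1 1, axis 2 1}"

definition smooth_on :: "(real^2) set \<Rightarrow> (real^2 \<Rightarrow> real) \<Rightarrow> bool" where
  "smooth_on S f \<longleftrightarrow> (\<forall>vs. set vs \<subseteq> coord_dirs \<longrightarrow> iderv vs f differentiable_on S)"

definition laplacian :: "(real^2 \<Rightarrow> real) \<Rightarrow> real^2 \<Rightarrow> real" where
  "laplacian f x = iderv [axis 1 1, axis 1 1] f x + iderv [axis 2 1, axis 2 1] f x"

definition rot :: "real \<Rightarrow> real^2 \<Rightarrow> real^2" where
  "rot phi v = vector [cos phi * v$1 - sin phi * v$2, sin phi * v$1 + cos phi * v$2]"

definition seg :: "real^2 \<Rightarrow> real^2 \<Rightarrow> real \<Rightarrow> (real^2) set" where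
  "seg x0 e h = {x0 + t *\<^sub>R e | t. 0 \<le> t \<and> t \<le> h}"

definition vanishes_to_order :: "(real^2 \<Rightarrow> real) \<Rightarrow> real^2 \<Rightarrow> nat \<Rightarrow> bool" where
  "vanishes_to_order f x0 n \<longleftrightarrow>
     (\<forall>vs. set vs \<subseteq> coord_dirs \<longrightarrow> length vs < n \<longrightarrow> iderv vs f x0 = 0)"

end

(* Induction on the order m < n. Once all derivatives of order < m vanish at x0, the Helmholtz
   equation makes the m-th order part of u harmonic, so the m-th derivatives of u at x0 are those of
   Re (gamma z^m) for a single complex gamma, z = x$2 + i x$1. Differentiating each boundary condition
   m - 1 times along its segment (the Robin term is of lower order and drops out) gives
   Re (-i gamma z(e-)^m) = 0 and Re (-i gamma z(e-)^m cis (-m alpha pi)) = 0, which forces gamma = 0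
   because m alpha is not an integer. *)

theory Submission
  imports Defs
begin

abbreviation E1 :: "real^2" where "E1 \<equiv> axis 1 1"
abbreviation E2 :: "real^2" where "E2 \<equiv> axis 2 1"

lemma E1_neq_E2: "E1 \<noteq> E2"
  by (simp add: axis_eq_axis)

lemma E1_E2_in_coord_dirs: "E1 \<in> coord_dirs" "E2 \<in> coord_dirs"
  by (auto simp: coord_dirs_def)

lemma vector2_eq_coord_combination: "(v::real^2) = v$1 *\<^sub>R E1 + v$2 *\<^sub>R E2"
  by (simp add: vec_eq_iff forall_2 axis_def)

section \<open>Directional derivatives\<close>

lemma has_derivative_along_line:
  assumes "(g has_derivative D) (at (p + z *\<^sub>R a))"
  shows "((\<lambda>s. g (p + s *\<^sub>R a)) has_real_derivative D a) (at z)"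
proof -
  have "((\<lambda>s. p + s *\<^sub>R a) has_derivative (\<lambda>s. s *\<^sub>R a)) (at z)"
    by (auto intro!: derivative_eq_intros)
  from diff_chain_at[OF this assms]
  have "((\<lambda>s. g (p + s *\<^sub>R a)) has_derivative (\<lambda>s. D (s *\<^sub>R a))) (at z)"
    by (simp add: o_def)
  moreover have "(\<lambda>s. D (s *\<^sub>R a)) = (*) (D a)"
    using has_derivative_bounded_linear[OF assms]
    by (auto simp: fun_eq_iff bounded_linear.linear linear_cmul mult.commute)
  ultimately show ?thesis
    by (simp add: has_field_derivative_def)
qed

lemma has_derivative_imp_dirderiv:
  assumes "(g has_derivative D) (at p)"
  shows "dirderiv a g p = D a"
  unfolding dirderiv_def
  using has_derivative_along_line[of g D p 0 a] assms by (simp add: DERIV_imp_deriv)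

lemma DERIV_along_line_dirderiv:
  assumes "g differentiable (at (p + z *\<^sub>R a))"
  shows "((\<lambda>s. g (p + s *\<^sub>R a)) has_real_derivative dirderiv a g (p + z *\<^sub>R a)) (at z)"
proof -
  obtain D where D: "(g has_derivative D) (at (p + z *\<^sub>R a))"
    using assms differentiable_def by blast
  show ?thesis
    using has_derivative_along_line[OF D] has_derivative_imp_dirderiv[OF D] by simp
qed

lemma dirderiv_coord_expansion:
  assumes "g differentiable (at p)"
  shows "dirderiv v g p = v$1 * dirderiv E1 g p + v$2 * dirderiv E2 g p"
proof -
  obtain D where D: "(g has_derivative D) (at p)"
    using assms differentiable_def by blast
  have "linear D"
    using has_derivative_bounded_linear[OF D] bounded_linear.linear by blast
  then have "D v = v$1 * D E1 + v$2 * D E2"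
    by (subst vector2_eq_coord_combination) (simp add: linear_add linear_cmul)
  then show ?thesis
    using has_derivative_imp_dirderiv[OF D] by simp
qed

lemma dirderiv_lincomb:
  assumes "f differentiable (at p)" "g differentiable (at p)"
  shows "dirderiv v (\<lambda>y. a * f y + b * g y) p = a * dirderiv v f p + b * dirderiv v g p"
proof -
  obtain D D' where D: "(f has_derivative D) (at p)" and D': "(g has_derivative D') (at p)"
    using assms differentiable_def by blast
  have "((\<lambda>y. a * f y + b * g y) has_derivative (\<lambda>h. a * D h + b * D' h)) (at p)"
    by (intro has_derivative_add has_derivative_mult_right D D')
  from has_derivative_imp_dirderiv[OF this] has_derivative_imp_dirderiv[OF D]
    has_derivative_imp_dirderiv[OF D']
  show ?thesis by simp
qed

lemma dirderiv_cong_open: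
  assumes "open S" "x \<in> S" "\<forall>y\<in>S. F y = G y"
  shows "dirderiv v F x = dirderiv v G x"
proof -
  have "((\<lambda>t. x + t *\<^sub>R v) \<longlongrightarrow> x + 0 *\<^sub>R v) (nhds 0)"
    by (rule tendsto_at_iff_tendsto_nhds[THEN iffD1]) (intro tendsto_intros)
  then have "eventually (\<lambda>t. x + t *\<^sub>R v \<in> S) (nhds 0)"
    using topological_tendstoD assms(1,2) by fastforce
  then have "eventually (\<lambda>t. F (x + t *\<^sub>R v) = G (x + t *\<^sub>R v)) (nhds 0)"
    by (rule eventually_mono) (use assms(3) in auto)
  then show ?thesis
    unfolding dirderiv_def by (rule deriv_cong_ev) simp
qed

lemma iderv_cong_open:
  assumes "open S" "x \<in> S" "\<forall>y\<in>S. F y = G y"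
  shows "iderv vs F x = iderv vs G x"
  using assms(2)
proof (induction vs arbitrary: x)
  case Nil
  then show ?case using assms(3) by simp
next
  case (Cons w vs)
  then show ?case
    using dirderiv_cong_open[OF assms(1) Cons.prems, of "iderv vs F" "iderv vs G"] by simp
qed

lemma iderv_append: "iderv (vs @ ws) f = iderv vs (iderv ws f)"
  by (induction vs) auto

section \<open>Smooth functions\<close>

lemma iderv_lincomb:
  assumes "open S"
    and diff: "\<And>vs y. set vs \<subseteq> A \<Longrightarrow> y \<in> S \<Longrightarrow>
       iderv vs f differentiable (at y) \<and> iderv vs g differentiable (at y)"
    and "set ws \<subseteq> A" "x \<in> S"
  shows "iderv ws (\<lambda>y. a * f y + b * g y) x = a * iderv ws f x + b * iderv ws g x"
  using assms(3,4)
proof (induction ws arbitrary: x)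
  case Nil
  then show ?case by simp
next
  case (Cons w ws)
  have "iderv (w # ws) (\<lambda>y. a * f y + b * g y) x
      = dirderiv w (\<lambda>y. a * iderv ws f y + b * iderv ws g y) x"
    using dirderiv_cong_open[OF assms(1) Cons.prems(2)] Cons by simp
  also have "\<dots> = a * iderv (w # ws) f x + b * iderv (w # ws) g x"
    using dirderiv_lincomb diff[of ws x] Cons.prems by simp
  finally show ?case .
qed

lemma smooth_on_imp_differentiable_at:
  assumes "open S" "smooth_on S f" "set ws \<subseteq> coord_dirs" "x \<in> S"
  shows "iderv ws f differentiable (at x)"
  using assms unfolding smooth_on_def
  by (meson differentiable_on_eq_differentiable_at)

lemma differentiable_on_cong:
  assumes "f differentiable_on S" "\<And>x. x \<in> S \<Longrightarrow> f x = g x"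
  shows "g differentiable_on S"
  using assms differentiable_transform_within[OF _ zero_less_one]
  unfolding differentiable_on_def by metis

lemma smooth_on_cong:
  assumes "open S" "smooth_on S F" "\<forall>y\<in>S. F y = G y"
  shows "smooth_on S G"
  unfolding smooth_on_def
proof (intro allI impI)
  fix ws assume "set ws \<subseteq> coord_dirs"
  then show "iderv ws G differentiable_on S"
    using assms(2) iderv_cong_open[OF assms(1) _ assms(3)]
    unfolding smooth_on_def by (metis differentiable_on_cong)
qed

lemma smooth_on_lincomb:
  assumes "open S" "smooth_on S f" "smooth_on S g"
  shows "smooth_on S (\<lambda>y. a * f y + b * g y)"
  unfolding smooth_on_def
proof (intro allI impI)
  fix ws assume ws: "set ws \<subseteq> coord_dirs"
  have "(\<lambda>y. a * iderv ws f y + b * iderv ws g y) differentiable_on S"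
    using assms(2,3) ws unfolding smooth_on_def by (intro derivative_intros) auto
  moreover have "\<And>y. y \<in> S \<Longrightarrow> a * iderv ws f y + b * iderv ws g y = iderv ws (\<lambda>y. a * f y + b * g y) y"
    using iderv_lincomb[OF assms(1), of coord_dirs f g ws]
      smooth_on_imp_differentiable_at assms ws by simp
  ultimately show "iderv ws (\<lambda>y. a * f y + b * g y) differentiable_on S"
    by (rule differentiable_on_cong)
qed

lemma smooth_on_iderv_coords:
  assumes "smooth_on S f" "set ws \<subseteq> coord_dirs"
  shows "smooth_on S (iderv ws f)"
  using assms unfolding smooth_on_def by (simp add: iderv_append[symmetric])

lemma smooth_on_dirderiv:
  assumes "open S" "smooth_on S f"
  shows "smooth_on S (dirderiv v f)"
proof -
  have "smooth_on S (\<lambda>y. v$1 * dirderiv E1 f y + v$2 * dirderiv E2 f y)"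
    using smooth_on_lincomb[OF assms(1) smooth_on_iderv_coords[OF assms(2), of "[E1]"]
        smooth_on_iderv_coords[OF assms(2), of "[E2]"]] E1_E2_in_coord_dirs by simp
  moreover have "\<forall>y\<in>S. v$1 * dirderiv E1 f y + v$2 * dirderiv E2 f y = dirderiv v f y"
    using dirderiv_coord_expansion[symmetric] smooth_on_imp_differentiable_at[OF assms, of "[]"]
    by simp
  ultimately show ?thesis
    using smooth_on_cong[OF assms(1)] by blast
qed

lemma smooth_on_iderv:
  assumes "open S" "smooth_on S f"
  shows "smooth_on S (iderv vs f)"
  by (induction vs) (simp_all add: assms smooth_on_dirderiv)

lemma differentiable_at_iderv:
  assumes "open S" "smooth_on S f" "x \<in> S"
  shows "iderv vs f differentiable (at x)"
  using smooth_on_imp_differentiable_at[OF assms(1) smooth_on_iderv[OF assms(1,2)], of "[]"] assms(3)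
  by simp

lemma iderv_lincomb_smooth:
  assumes "open S" "smooth_on S f" "smooth_on S g" "x \<in> S"
  shows "iderv ws (\<lambda>y. a * f y + b * g y) x = a * iderv ws f x + b * iderv ws g x"
  by (rule iderv_lincomb[OF assms(1), of UNIV]) (use differentiable_at_iderv assms in auto)

lemma iderv_coord_expansion:
  assumes "open S" "smooth_on S f" "x \<in> S"
  shows "iderv (pre @ v # post) f x
    = v$1 * iderv (pre @ E1 # post) f x + v$2 * iderv (pre @ E2 # post) f x"
proof -
  let ?F = "iderv post f"
  have "\<forall>y\<in>S. dirderiv v ?F y = v$1 * iderv [E1] ?F y + v$2 * iderv [E2] ?F y"
    unfolding iderv.simps
    using dirderiv_coord_expansion[OF differentiable_at_iderv[OF assms(1,2)]] by blast
  then have "iderv pre (dirderiv v ?F) x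
      = iderv pre (\<lambda>y. v$1 * iderv [E1] ?F y + v$2 * iderv [E2] ?F y) x"
    by (rule iderv_cong_open[OF assms(1,3)])
  also have "\<dots> = v$1 * iderv pre (iderv [E1] ?F) x + v$2 * iderv pre (iderv [E2] ?F) x"
    using assms by (intro iderv_lincomb_smooth smooth_on_iderv)
  finally show ?thesis
    by (simp add: iderv_append)
qed

section \<open>Symmetry of second derivatives\<close>

lemma second_difference_mean_value:
  fixes g :: "real^2 \<Rightarrow> real"
  assumes "t > 0"
    and diff: "\<And>s. 0 \<le> s \<Longrightarrow> s \<le> t \<Longrightarrow>
      g differentiable (at (x + t *\<^sub>R b + s *\<^sub>R a)) \<and> g differentiable (at (x + s *\<^sub>R a))"
  obtains z where "0 < z" "z < t"
    "g (x + t *\<^sub>R b + t *\<^sub>R a) - g (x + t *\<^sub>R a) - g (x + t *\<^sub>R b) + g x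
      = t * (dirderiv a g (x + t *\<^sub>R b + z *\<^sub>R a) - dirderiv a g (x + z *\<^sub>R a))"
proof -
  define \<phi> where "\<phi> s = g (x + t *\<^sub>R b + s *\<^sub>R a) - g (x + s *\<^sub>R a)" for s
  have "(\<phi> has_real_derivative (dirderiv a g (x + t *\<^sub>R b + s *\<^sub>R a) - dirderiv a g (x + s *\<^sub>R a))) (at s)"
    if "0 \<le> s" "s \<le> t" for s
    unfolding \<phi>_def by (intro DERIV_diff DERIV_along_line_dirderiv) (use diff[OF that] in auto)
  from MVT2[OF assms(1) this] show ?thesis
    using that by (auto simp: \<phi>_def)
qed

lemma second_difference_approx:
  fixes g :: "real^2 \<Rightarrow> real"
  assumes "open S" "x \<in> S" "\<forall>y\<in>S. g differentiable (at y)"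
    and L: "(dirderiv a g has_derivative L) (at x)" and "\<epsilon> > 0"
  obtains \<delta> where "\<delta> > 0" and "\<And>t. 0 < t \<Longrightarrow> t < \<delta> \<Longrightarrow>
      \<bar>g (x + t *\<^sub>R b + t *\<^sub>R a) - g (x + t *\<^sub>R a) - g (x + t *\<^sub>R b) + g x - t\<^sup>2 * L b\<bar>
        \<le> \<epsilon> * (norm a + norm b) * t\<^sup>2"
proof -
  let ?G = "dirderiv a g" and ?N = "norm a + norm b"
  obtain d where d: "d > 0"
    "\<And>y. norm (y - x) < d \<Longrightarrow> \<bar>?G y - ?G x - L (y - x)\<bar> \<le> \<epsilon> / 2 * norm (y - x)"
    using conjunct2[OF L[unfolded has_derivative_at_alt], rule_format, of "\<epsilon> / 2"] \<open>\<epsilon> > 0\<close>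
    by auto
  obtain r where r: "r > 0" "ball x r \<subseteq> S"
    using open_contains_ball assms(1,2) by blast
  define \<delta> where "\<delta> = min d r / (?N + 1)"
  have "\<delta> > 0"
    using d r by (simp add: \<delta>_def add_nonneg_pos)
  then show ?thesis
  proof (rule that)
    fix t :: real assume t: "0 < t" "t < \<delta>"
    have "t * (?N + 1) < min d r"
      using t by (simp add: \<delta>_def pos_less_divide_eq add_nonneg_pos)
    then have tN: "t * ?N < d" "t * ?N < r"
      using t by (simp_all add: distrib_left)
    have norm_bounds: "norm (t *\<^sub>R b + s *\<^sub>R a) \<le> t * ?N" "norm (s *\<^sub>R a) \<le> t * ?N"
      if "0 \<le> s" "s \<le> t" for s
    proof -
      have "norm (s *\<^sub>R a) \<le> t * norm a"
        using that by (simp add: mult_right_mono)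
      then show "norm (t *\<^sub>R b + s *\<^sub>R a) \<le> t * ?N" "norm (s *\<^sub>R a) \<le> t * ?N"
        using norm_triangle_ineq[of "t *\<^sub>R b" "s *\<^sub>R a"] t
        by (simp_all add: distrib_left add_increasing2)
    qed
    have "x + t *\<^sub>R b + s *\<^sub>R a \<in> S \<and> x + s *\<^sub>R a \<in> S" if "0 \<le> s" "s \<le> t" for s
      using norm_bounds[OF that] tN r(2) dist_norm[of "x + _" x]
      by (auto simp: dist_commute add.assoc)
    then obtain z where z: "0 < z" "z < t"
      and mvt: "g (x + t *\<^sub>R b + t *\<^sub>R a) - g (x + t *\<^sub>R a) - g (x + t *\<^sub>R b) + g x
        = t * (?G (x + t *\<^sub>R b + z *\<^sub>R a) - ?G (x + z *\<^sub>R a))"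
      using second_difference_mean_value[OF t(1)] assms(3) by metis
    have approx: "\<bar>?G (x + v) - ?G x - L v\<bar> \<le> \<epsilon> / 2 * (t * ?N)" if "norm v \<le> t * ?N" for v
      using d(2)[of "x + v"] that tN \<open>\<epsilon> > 0\<close> by (simp add: order_trans[OF _ mult_left_mono])
    have "L (t *\<^sub>R b + z *\<^sub>R a) - L (z *\<^sub>R a) = t * L b"
      using has_derivative_bounded_linear[OF L] by (simp add: bounded_linear.linear linear_add linear_cmul)
    then have "\<bar>(?G (x + t *\<^sub>R b + z *\<^sub>R a) - ?G (x + z *\<^sub>R a)) - t * L b\<bar> \<le> \<epsilon> * (t * ?N)"
      using approx[OF norm_bounds(1)[of z]] approx[OF norm_bounds(2)[of z]] z
      unfolding add.assoc by linarith
    then have "\<bar>t * ((?G (x + t *\<^sub>R b + z *\<^sub>R a) - ?G (x + z *\<^sub>R a)) - t * L b)\<bar> \<le> t * (\<epsilon> * (t * ?N))"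
      using t by (simp add: abs_mult mult_left_mono)
    then show "\<bar>g (x + t *\<^sub>R b + t *\<^sub>R a) - g (x + t *\<^sub>R a) - g (x + t *\<^sub>R b) + g x
        - t\<^sup>2 * L b\<bar> \<le> \<epsilon> * ?N * t\<^sup>2"
      unfolding mvt by (simp add: power2_eq_square algebra_simps)
  qed
qed

lemma dirderiv_commute:
  fixes g :: "real^2 \<Rightarrow> real"
  assumes "open S" "x \<in> S" "\<forall>y\<in>S. g differentiable (at y)"
    and "dirderiv a g differentiable (at x)" "dirderiv b g differentiable (at x)"
  shows "dirderiv b (dirderiv a g) x = dirderiv a (dirderiv b g) x"
proof -
  obtain La Lb where La: "(dirderiv a g has_derivative La) (at x)"
    and Lb: "(dirderiv b g has_derivative Lb) (at x)"
    using assms(4,5) differentiable_def by blast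
  let ?N = "norm a + norm b"
  have "La b = Lb a"
  proof (rule ccontr)
    assume "La b \<noteq> Lb a"
    define \<epsilon> where "\<epsilon> = \<bar>La b - Lb a\<bar> / (4 * (?N + 1))"
    have "\<epsilon> > 0"
      using \<open>La b \<noteq> Lb a\<close> by (simp add: \<epsilon>_def add_nonneg_pos)
    obtain d1 where "d1 > 0" and d1: "\<And>t. 0 < t \<Longrightarrow> t < d1 \<Longrightarrow>
      \<bar>g (x + t *\<^sub>R b + t *\<^sub>R a) - g (x + t *\<^sub>R a) - g (x + t *\<^sub>R b) + g x - t\<^sup>2 * La b\<bar>
        \<le> \<epsilon> * ?N * t\<^sup>2"
      using second_difference_approx[OF assms(1-3) La \<open>\<epsilon> > 0\<close>] by blast
    obtain d2 where "d2 > 0" and d2: "\<And>t. 0 < t \<Longrightarrow> t < d2 \<Longrightarrow>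
      \<bar>g (x + t *\<^sub>R a + t *\<^sub>R b) - g (x + t *\<^sub>R b) - g (x + t *\<^sub>R a) + g x - t\<^sup>2 * Lb a\<bar>
        \<le> \<epsilon> * (norm b + norm a) * t\<^sup>2"
      using second_difference_approx[OF assms(1-3) Lb \<open>\<epsilon> > 0\<close>] by blast
    define t where "t = min d1 d2 / 2"
    have t: "0 < t" "t < d1" "t < d2"
      using \<open>d1 > 0\<close> \<open>d2 > 0\<close> by (auto simp: t_def)
    have sw: "x + t *\<^sub>R a + t *\<^sub>R b = x + t *\<^sub>R b + t *\<^sub>R a"
      by (simp add: algebra_simps)
    have "\<bar>t\<^sup>2 * La b - t\<^sup>2 * Lb a\<bar> \<le> \<epsilon> * ?N * t\<^sup>2 + \<epsilon> * (norm b + norm a) * t\<^sup>2"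
      using d1[OF t(1,2)] d2[OF t(1,3)] unfolding sw abs_le_iff by linarith
    moreover have "\<bar>t\<^sup>2 * La b - t\<^sup>2 * Lb a\<bar> = t\<^sup>2 * \<bar>La b - Lb a\<bar>"
      by (simp add: right_diff_distrib[symmetric] abs_mult)
    moreover have "\<epsilon> * ?N * t\<^sup>2 + \<epsilon> * (norm b + norm a) * t\<^sup>2 = t\<^sup>2 * (2 * \<epsilon> * ?N)"
      by (simp add: algebra_simps)
    ultimately have "t\<^sup>2 * \<bar>La b - Lb a\<bar> \<le> t\<^sup>2 * (2 * \<epsilon> * ?N)"
      by linarith
    then have "\<bar>La b - Lb a\<bar> \<le> 2 * \<epsilon> * ?N"
      using t(1) by simp
    also have "\<dots> = \<bar>La b - Lb a\<bar> * ?N / (2 * (?N + 1))"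
      using add_nonneg_pos[of ?N 1] by (simp add: \<epsilon>_def field_simps)
    also have "\<dots> < \<bar>La b - Lb a\<bar>"
      using \<open>La b \<noteq> Lb a\<close> by (simp add: pos_divide_less_eq add_nonneg_pos)
    finally show False
      by simp
  qed
  then show ?thesis
    using has_derivative_imp_dirderiv[OF La] has_derivative_imp_dirderiv[OF Lb] by simp
qed

lemma iderv_swap:
  assumes "open S" "smooth_on S f" "x \<in> S"
  shows "iderv (pre @ a # b # post) f x = iderv (pre @ b # a # post) f x"
proof -
  let ?F = "iderv post f"
  have "\<forall>y\<in>S. iderv [a, b] ?F y = iderv [b, a] ?F y"
  proof
    fix y assume "y \<in> S"
    have "dirderiv a ?F differentiable (at y)" "dirderiv b ?F differentiable (at y)"
      using differentiable_at_iderv[OF assms(1,2) \<open>y \<in> S\<close>, of "a # post"]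
        differentiable_at_iderv[OF assms(1,2) \<open>y \<in> S\<close>, of "b # post"] by simp_all
    moreover have "\<forall>z\<in>S. ?F differentiable (at z)"
      using differentiable_at_iderv[OF assms(1,2)] by blast
    ultimately have "dirderiv a (dirderiv b ?F) y = dirderiv b (dirderiv a ?F) y"
      using dirderiv_commute[OF assms(1) \<open>y \<in> S\<close>] by blast
    then show "iderv [a, b] ?F y = iderv [b, a] ?F y"
      by simp
  qed
  then have "iderv pre (iderv [a, b] ?F) x = iderv pre (iderv [b, a] ?F) x"
    by (rule iderv_cong_open[OF assms(1,3)])
  then show ?thesis
    using iderv_append[of pre "a # b # post" f] iderv_append[of pre "b # a # post" f] by simp
qed

section \<open>Coordinate derivatives in normal form\<close>

definition sort_coords :: "(real^2) list \<Rightarrow> (real^2) list" where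
  "sort_coords ws = replicate (count_list ws E1) E1 @ replicate (length ws - count_list ws E1) E2"

lemma iderv_E2_past_E1s:
  assumes "open S" "smooth_on S f" "x \<in> S"
  shows "iderv (replicate i E1 @ E2 # replicate j E1 @ rest) f x
    = iderv (replicate (i + j) E1 @ E2 # rest) f x"
proof (induction j arbitrary: i)
  case 0
  then show ?case by simp
next
  case (Suc j)
  have "iderv (replicate i E1 @ E2 # replicate (Suc j) E1 @ rest) f x
      = iderv (replicate i E1 @ E1 # E2 # (replicate j E1 @ rest)) f x"
    using iderv_swap[OF assms] by simp
  also have "\<dots> = iderv (replicate (Suc i) E1 @ E2 # replicate j E1 @ rest) f x"
    by (simp add: replicate_app_Cons_same)
  also have "\<dots> = iderv (replicate (i + Suc j) E1 @ E2 # rest) f x"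
    using Suc.IH[of "Suc i"] by simp
  finally show ?case .
qed

lemma iderv_sort_coords:
  assumes "open S" "smooth_on S f" "set ws \<subseteq> coord_dirs" "x \<in> S"
  shows "iderv ws f x = iderv (sort_coords ws) f x"
  using assms(3,4)
proof (induction ws arbitrary: x)
  case Nil
  then show ?case by (simp add: sort_coords_def)
next
  case (Cons w ws)
  have "iderv (w # ws) f x = iderv (w # sort_coords ws) f x"
    using dirderiv_cong_open[OF assms(1) Cons.prems(2)] Cons by simp
  also have "\<dots> = iderv (sort_coords (w # ws)) f x"
  proof -
    let ?k = "count_list ws E1"
    have "w = E1 \<or> w = E2"
      using Cons.prems by (auto simp: coord_dirs_def)
    then show ?thesis
    proof
      assume "w = E1"
      then show ?thesis by (simp add: sort_coords_def)
    next
      assume "w = E2"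
      then have "iderv (w # sort_coords ws) f x
          = iderv (replicate ?k E1 @ E2 # replicate (length ws - ?k) E2) f x"
        using iderv_E2_past_E1s[OF assms(1,2) Cons.prems(2), of 0 ?k]
        by (simp add: sort_coords_def)
      also have "\<dots> = iderv (sort_coords (w # ws)) f x"
        using \<open>w = E2\<close> E1_neq_E2 count_le_length[of ws E1]
        by (simp add: sort_coords_def Suc_diff_le replicate_app_Cons_same)
      finally show ?thesis .
    qed
  qed
  finally show ?case .
qed

section \<open>Derivatives of solutions of the Helmholtz equation\<close>

lemma iderv_helmholtz:
  assumes "open S" "smooth_on S u" "x0 \<in> S" "\<forall>x\<in>S. - laplacian u x = lam * u x"
  shows "iderv (ws @ [E1, E1]) u x0 + iderv (ws @ [E2, E2]) u x0 = - lam * iderv ws u x0"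
proof -
  have "\<forall>y\<in>S. laplacian u y = (- lam) * u y + 0 * u y"
    using assms(4) by force
  then have "iderv ws (laplacian u) x0 = iderv ws (\<lambda>y. (- lam) * u y + 0 * u y) x0"
    by (rule iderv_cong_open[OF assms(1,3)])
  also have "\<dots> = - lam * iderv ws u x0"
    using iderv_lincomb_smooth[OF assms(1,2,2,3), of ws "- lam" 0] by simp
  finally have "iderv ws (laplacian u) x0 = - lam * iderv ws u x0" .
  moreover have "laplacian u = (\<lambda>y. 1 * iderv [E1, E1] u y + 1 * iderv [E2, E2] u y)"
    by (simp add: laplacian_def fun_eq_iff)
  then have "iderv ws (laplacian u) x0
      = 1 * iderv ws (iderv [E1, E1] u) x0 + 1 * iderv ws (iderv [E2, E2] u) x0"
    by (simp only:) (rule iderv_lincomb_smooth[OF assms(1) smooth_on_iderv[OF assms(1,2)]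
        smooth_on_iderv[OF assms(1,2)] assms(3)])
  ultimately show ?thesis
    by (simp add: iderv_append)
qed

lemma count_list_replicate: "count_list (replicate n x) y = (if x = y then n else 0)"
  by (induction n) auto

lemma helmholtz_coord_derivs_eq_Re:
  assumes "open S" "smooth_on S u" "x0 \<in> S" "\<forall>x\<in>S. - laplacian u x = lam * u x"
    and lower: "\<And>ws. set ws \<subseteq> coord_dirs \<Longrightarrow> length ws + 2 = m \<Longrightarrow> iderv ws u x0 = 0"
  obtains \<gamma> where "\<And>ws. set ws \<subseteq> coord_dirs \<Longrightarrow> length ws = m \<Longrightarrow>
    iderv ws u x0 = Re (\<gamma> * \<i> ^ count_list ws E1)"
proof -
  define a where "a j = iderv (replicate j E1 @ replicate (m - j) E2) u x0" for j
  have normal_form: "iderv ws u x0 = a (count_list ws E1)" if "set ws \<subseteq> coord_dirs" "length ws = m" for ws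
    using iderv_sort_coords[OF assms(1,2) that(1) assms(3)] that(2) by (simp add: sort_coords_def a_def)
  have rec: "a (j + 2) = - a j" if "j + 2 \<le> m" for j
  proof -
    define ws where "ws = replicate j E1 @ replicate (m - 2 - j) E2"
    have ws: "set ws \<subseteq> coord_dirs" "set (ws @ [E1, E1]) \<subseteq> coord_dirs" "set (ws @ [E2, E2]) \<subseteq> coord_dirs"
      using E1_E2_in_coord_dirs by (auto simp: ws_def)
    have "iderv (ws @ [E1, E1]) u x0 + iderv (ws @ [E2, E2]) u x0 = - lam * iderv ws u x0"
      by (rule iderv_helmholtz[OF assms(1-4)])
    moreover have "iderv ws u x0 = 0"
      using lower[OF ws(1)] that by (simp add: ws_def)
    moreover have "iderv (ws @ [E1, E1]) u x0 = a (j + 2)"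
      using normal_form[OF ws(2)] that E1_neq_E2 by (simp add: ws_def count_list_replicate)
    moreover have "iderv (ws @ [E2, E2]) u x0 = a j"
      using normal_form[OF ws(3)] that E1_neq_E2 by (simp add: ws_def count_list_replicate)
    ultimately show ?thesis
      by simp
  qed
  define \<gamma> where "\<gamma> = Complex (a 0) (- a 1)"
  have "a j = Re (\<gamma> * \<i> ^ j)" if "j \<le> m" for j
    using that
  proof (induction j rule: less_induct)
    case (less j)
    show ?case
    proof (cases "j < 2")
      case True
      then have "j = 0 \<or> j = 1" by auto
      then show ?thesis by (auto simp: \<gamma>_def)
    next
      case False
      then obtain k where k: "j = k + 2"
        by (metis add.commute le_Suc_ex not_less)
      then show ?thesis
        using rec[of k] less.IH[of k] less.prems by (simp add: power_add)
    qed
  qed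
  then show ?thesis
    using that normal_form count_le_length by metis
qed

(* E1 |-> i and E2 |-> 1: the polynomial Re (gamma (x$2 + i x$1)^m) then has m-th derivatives
   m! * Re (gamma * prod_list (map to_complex vs)). *)
definition to_complex :: "real^2 \<Rightarrow> complex" where
  "to_complex v = Complex (v$2) (v$1)"

lemma to_complex_E1_E2: "to_complex E1 = \<i>" "to_complex E2 = 1"
  by (simp_all add: to_complex_def axis_def complex_eq_iff)

lemma to_complex_eq_combination: "to_complex v = of_real (v$1) * \<i> + of_real (v$2)"
  by (simp add: to_complex_def complex_eq_iff)

lemma to_complex_rot: "to_complex (rot \<phi> v) = cis (- \<phi>) * to_complex v"
  by (simp add: to_complex_def rot_def complex_eq_iff algebra_simps)

lemma to_complex_eq_0_iff: "to_complex v = 0 \<longleftrightarrow> v = 0"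
  by (auto simp: to_complex_def complex_eq_iff vec_eq_iff forall_2)

lemma prod_list_to_complex_coords:
  "set ws \<subseteq> coord_dirs \<Longrightarrow> prod_list (map to_complex ws) = \<i> ^ count_list ws E1"
  by (induction ws) (auto simp: coord_dirs_def to_complex_E1_E2 E1_neq_E2 E1_neq_E2[symmetric])

lemma Re_linear_combination:
  "Re (g * (p * (of_real a * z + of_real b * w) * q)) = a * Re (g * (p * z * q)) + b * Re (g * (p * w * q))"
  by (simp add: algebra_simps)

lemma iderv_eq_Re_prod_if_coords:
  assumes "open S" "smooth_on S u" "x0 \<in> S"
    and coords: "\<And>ws. set ws \<subseteq> coord_dirs \<Longrightarrow> length ws = m \<Longrightarrow>
      iderv ws u x0 = Re (\<gamma> * prod_list (map to_complex ws))"
    and "length vs = m"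
  shows "iderv vs u x0 = Re (\<gamma> * prod_list (map to_complex vs))"
proof -
  have "\<forall>post. set post \<subseteq> coord_dirs \<longrightarrow> length pre + length post = m \<longrightarrow>
      iderv (pre @ post) u x0 = Re (\<gamma> * prod_list (map to_complex (pre @ post)))" for pre
  proof (induction pre rule: rev_induct)
    case Nil
    then show ?case using coords by simp
  next
    case (snoc v pre)
    show ?case
    proof (intro allI impI)
      fix post assume post: "set post \<subseteq> coord_dirs" "length (pre @ [v]) + length post = m"
      let ?P = "prod_list (map to_complex pre)" and ?Q = "prod_list (map to_complex post)"
      have h1: "iderv (pre @ E1 # post) u x0 = Re (\<gamma> * (?P * \<i> * ?Q))"
        using snoc.IH post E1_E2_in_coord_dirs by (simp add: to_complex_E1_E2 mult.assoc)
      have h2: "iderv (pre @ E2 # post) u x0 = Re (\<gamma> * (?P * 1 * ?Q))"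
        using snoc.IH post E1_E2_in_coord_dirs by (simp add: to_complex_E1_E2)
      have prod: "prod_list (map to_complex ((pre @ [v]) @ post))
          = ?P * (of_real (v$1) * \<i> + of_real (v$2) * 1) * ?Q"
        by (simp add: to_complex_eq_combination[of v] mult.assoc)
      have "iderv ((pre @ [v]) @ post) u x0
          = v$1 * iderv (pre @ E1 # post) u x0 + v$2 * iderv (pre @ E2 # post) u x0"
        using iderv_coord_expansion[OF assms(1-3), of pre v post] by simp
      also have "\<dots> = Re (\<gamma> * prod_list (map to_complex ((pre @ [v]) @ post)))"
        unfolding h1 h2 prod by (simp only: Re_linear_combination)
      finally show "iderv ((pre @ [v]) @ post) u x0
          = Re (\<gamma> * prod_list (map to_complex ((pre @ [v]) @ post)))" .
    qed
  qed
  from this[of vs] assms(5) show ?thesis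
    by simp
qed

lemma helmholtz_derivs_eq_Re_prod:
  assumes "open S" "smooth_on S u" "x0 \<in> S" "\<forall>x\<in>S. - laplacian u x = lam * u x"
    and "\<And>ws. set ws \<subseteq> coord_dirs \<Longrightarrow> length ws + 2 = m \<Longrightarrow> iderv ws u x0 = 0"
  obtains \<gamma> where "\<And>vs. length vs = m \<Longrightarrow> iderv vs u x0 = Re (\<gamma> * prod_list (map to_complex vs))"
proof -
  obtain \<gamma> where "\<And>ws. set ws \<subseteq> coord_dirs \<Longrightarrow> length ws = m \<Longrightarrow>
      iderv ws u x0 = Re (\<gamma> * \<i> ^ count_list ws E1)"
    using helmholtz_coord_derivs_eq_Re[OF assms] by blast
  then show ?thesis
    using that iderv_eq_Re_prod_if_coords[OF assms(1-3)] prod_list_to_complex_coords by metis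
qed

section \<open>Boundary conditions on a segment\<close>

lemma iderv_replicate_eq_0_on_seg:
  assumes "open S" "smooth_on S F" "seg x0 e h \<subseteq> S" "h > 0" "\<forall>y\<in>seg x0 e h. F y = 0"
  shows "iderv (replicate k e) F x0 = 0"
proof -
  have on_seg: "x0 + s *\<^sub>R e \<in> seg x0 e h" if "0 \<le> s" "s < h" for s
    unfolding seg_def using that by force
  have "iderv (replicate k e) F (x0 + s *\<^sub>R e) = 0" if "0 \<le> s" "s < h" for s
    using that
  proof (induction k arbitrary: s)
    case 0
    then show ?case
      using assms(5) on_seg by simp
  next
    case (Suc k)
    let ?G = "iderv (replicate k e) F" and ?y = "x0 + s *\<^sub>R e"
    have "?y \<in> S"
      using on_seg[OF Suc.prems] assms(3) by blast
    then have "((\<lambda>t. ?G (?y + t *\<^sub>R e)) has_real_derivative dirderiv e ?G ?y) (at 0 within {0<..})"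
      using DERIV_along_line_dirderiv[of ?G ?y 0 e] differentiable_at_iderv[OF assms(1,2)]
      by (simp add: has_field_derivative_at_within)
    moreover have "eventually (\<lambda>t. ?G (?y + t *\<^sub>R e) = 0) (at 0 within {0<..})"
      unfolding eventually_at_right_field
    proof (intro exI conjI allI impI)
      show "0 < h - s" using Suc.prems by simp
      fix t :: real assume "0 < t" "t < h - s"
      then show "?G (?y + t *\<^sub>R e) = 0"
        using Suc.IH[of "s + t"] Suc.prems by (simp add: scaleR_add_left add.assoc)
    qed
    moreover have "?G (?y + 0 *\<^sub>R e) = 0"
      using Suc.IH[of s] Suc.prems by simp
    ultimately have "((\<lambda>_. 0) has_real_derivative dirderiv e ?G ?y) (at 0 within {0<..})"
      using has_field_derivative_cong_eventually[of "\<lambda>t. ?G (?y + t *\<^sub>R e)" "\<lambda>_. 0"] by simp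
    then have "dirderiv e ?G ?y = 0"
      using has_field_derivative_unique DERIV_const trivial_limit_at_right_real by blast
    then show ?case
      by simp
  qed
  from this[of 0] assms(4) show ?thesis
    by simp
qed

lemma Robin_seg_Re_eq_0:
  assumes "open S" "smooth_on S u" "seg x0 e h \<subseteq> S" "h > 0"
    and "\<forall>x\<in>seg x0 e h. dirderiv (rot (pi / 2) e) u x + C * u x = 0"
    and "m \<ge> 1" and "iderv (replicate (m - 1) e) u x0 = 0"
    and rep: "\<And>vs. length vs = m \<Longrightarrow> iderv vs u x0 = Re (\<gamma> * prod_list (map to_complex vs))"
  shows "Re (\<gamma> * cis (- (pi / 2)) * to_complex e ^ m) = 0"
proof -
  let ?\<nu> = "rot (pi / 2) e" and ?es = "replicate (m - 1) e"
  have "x0 \<in> S"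
    using assms(3,4) unfolding seg_def by force
  have "smooth_on S (\<lambda>x. 1 * dirderiv ?\<nu> u x + C * u x)"
    by (rule smooth_on_lincomb[OF assms(1) smooth_on_dirderiv[OF assms(1,2)] assms(2)])
  then have "iderv ?es (\<lambda>x. 1 * dirderiv ?\<nu> u x + C * u x) x0 = 0"
    using iderv_replicate_eq_0_on_seg[OF assms(1) _ assms(3,4)] assms(5) by simp
  moreover have "iderv ?es (\<lambda>x. 1 * dirderiv ?\<nu> u x + C * u x) x0
      = 1 * iderv ?es (dirderiv ?\<nu> u) x0 + C * iderv ?es u x0"
    by (rule iderv_lincomb_smooth[OF assms(1) smooth_on_dirderiv[OF assms(1,2)] assms(2) \<open>x0 \<in> S\<close>])
  ultimately have "iderv (?es @ [?\<nu>]) u x0 = 0"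
    using assms(7) by (simp add: iderv_append)
  moreover have "prod_list (map to_complex (?es @ [?\<nu>])) = cis (- (pi / 2)) * to_complex e ^ m"
    using \<open>m \<ge> 1\<close> by (cases m) (simp_all add: to_complex_rot prod_list_replicate mult_ac)
  ultimately show ?thesis
    using rep[of "?es @ [?\<nu>]"] \<open>m \<ge> 1\<close> by (simp add: mult.assoc)
qed

section \<open>The vanishing order at the corner\<close>

lemma complex_eq_0_if_Re_and_Re_rotated_eq_0:
  assumes "Re z = 0" "Re (z * cis \<phi>) = 0" "sin \<phi> \<noteq> 0"
  shows "z = 0"
proof -
  have "Im z * sin \<phi> = 0"
    using assms(1,2) by simp
  then show ?thesis
    using assms(1,3) by (simp add: complex_eq_iff)
qed

lemma sin_mult_pi_neq_0:
  assumes "0 < \<alpha>" "\<alpha> < 1" "0 < m"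
    and not_rational: "\<And>q::nat. 0 < q \<Longrightarrow> q < m \<Longrightarrow> \<alpha> \<noteq> real q / real m"
  shows "sin (real m * \<alpha> * pi) \<noteq> 0"
proof
  assume "sin (real m * \<alpha> * pi) = 0"
  then obtain i :: int where "real m * \<alpha> * pi = real_of_int i * pi"
    using sin_zero_iff_int2 by blast
  then have i: "real m * \<alpha> = real_of_int i"
    by simp
  have "0 < real_of_int i" "real_of_int i < real m"
    using assms(1-3) unfolding i[symmetric] by simp_all
  then have "0 < nat i" "nat i < m"
    by linarith+
  moreover have "\<alpha> = real (nat i) / real m"
    using i \<open>0 < real_of_int i\<close> assms(3) by (simp add: field_simps)
  ultimately show False
    using not_rational by blast
qed

lemma Robin_corner_coeff_eq_0:
  assumes "open S" "smooth_on S u" "h > 0" "norm em = 1" "ep = rot (\<alpha> * pi) em"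
    and "seg x0 ep h \<subseteq> S" "seg x0 em h \<subseteq> S"
    and "\<forall>x\<in>seg x0 ep h. dirderiv (rot (pi / 2) ep) u x + Cp * u x = 0"
    and "\<forall>x\<in>seg x0 em h. dirderiv (rot (pi / 2) em) u x + Cm * u x = 0"
    and "m \<ge> 1" "sin (real m * \<alpha> * pi) \<noteq> 0"
    and lower: "\<And>vs. length vs < m \<Longrightarrow> iderv vs u x0 = 0"
    and rep: "\<And>vs. length vs = m \<Longrightarrow> iderv vs u x0 = Re (\<gamma> * prod_list (map to_complex vs))"
  shows "\<gamma> = 0"
proof -
  have "to_complex ep ^ m = cis (- (\<alpha> * pi)) ^ m * to_complex em ^ m"
    by (simp add: assms(5) to_complex_rot power_mult_distrib)
  also have "cis (- (\<alpha> * pi)) ^ m = cis (- (real m * \<alpha> * pi))"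
    by (simp only: Complex.DeMoivre) (simp add: algebra_simps)
  finally have "to_complex ep ^ m = to_complex em ^ m * cis (- (real m * \<alpha> * pi))"
    by (simp add: mult.commute)
  moreover have "Re (\<gamma> * cis (- (pi / 2)) * to_complex ep ^ m) = 0"
    by (rule Robin_seg_Re_eq_0[OF assms(1,2,6,3,8,10) lower rep]) (use assms(10) in simp)
  moreover have "Re (\<gamma> * cis (- (pi / 2)) * to_complex em ^ m) = 0"
    by (rule Robin_seg_Re_eq_0[OF assms(1,2,7,3,9,10) lower rep]) (use assms(10) in simp)
  moreover have "sin (- (real m * \<alpha> * pi)) \<noteq> 0"
    using assms(11) by simp
  ultimately have "\<gamma> * cis (- (pi / 2)) * to_complex em ^ m = 0"
    using complex_eq_0_if_Re_and_Re_rotated_eq_0 by (metis mult.assoc)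
  then show ?thesis
    using \<open>norm em = 1\<close> by (auto simp: to_complex_eq_0_iff)
qed

theorem theorem3p6:
  fixes \<Omega> :: "(real^2) set" and u :: "real^2 \<Rightarrow> real"
    and lam h \<alpha> C1 :: real and x0 em ep :: "real^2" and n :: nat
  assumes "open \<Omega>" and "lam > 0"
    and "smooth_on \<Omega> u"
    and "set_integrable lebesgue \<Omega> (\<lambda>x. (u x)\<^sup>2)"
    and "\<forall>x\<in>\<Omega>. - laplacian u x = lam * u x"
    and "x0 \<in> \<Omega>" and "h > 0" and "0 < \<alpha>" and "\<alpha> < 1"
    and "norm em = 1" and "ep = rot (\<alpha> * pi) em"
    and "seg x0 ep h \<subseteq> \<Omega>" and "seg x0 em h \<subseteq> \<Omega>"
    and "\<forall>x\<in>seg x0 ep h. dirderiv (rot (pi/2) ep) u x = 0"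
    and "C1 \<noteq> 0"
    and "\<forall>x\<in>seg x0 em h. dirderiv (rot (pi/2) em) u x + C1 * u x = 0"
    and "n \<ge> 3"
    and "u x0 = 0"
    and "\<forall>p q :: nat. 1 \<le> q \<longrightarrow> q < p \<longrightarrow> p \<le> n - 1 \<longrightarrow> \<alpha> \<noteq> real q / real p"
  shows "vanishes_to_order u x0 n"
proof -
  have "iderv ws u x0 = 0" if "m < n" "set ws \<subseteq> coord_dirs" "length ws = m" for m ws
    using that
  proof (induction m arbitrary: ws rule: less_induct)
    case (less m)
    have lower: "iderv vs u x0 = 0" if "length vs < m" for vs
      using iderv_eq_Re_prod_if_coords[OF assms(1,3,6), of "length vs" 0 vs] less that by simp
    show ?case
    proof (cases "m = 0")
      case True
      then show ?thesis using less.prems \<open>u x0 = 0\<close> by simp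
    next
      case False
      then have "m \<ge> 1"
        by simp
      have "\<And>ws. set ws \<subseteq> coord_dirs \<Longrightarrow> length ws + 2 = m \<Longrightarrow> iderv ws u x0 = 0"
        using lower by simp
      then obtain \<gamma> where \<gamma>: "\<And>vs. length vs = m \<Longrightarrow> iderv vs u x0 = Re (\<gamma> * prod_list (map to_complex vs))"
        using helmholtz_derivs_eq_Re_prod[OF assms(1,3,6,5)] by blast
      have "\<forall>x\<in>seg x0 ep h. dirderiv (rot (pi / 2) ep) u x + 0 * u x = 0"
        using assms(14) by simp
      moreover have "sin (real m * \<alpha> * pi) \<noteq> 0"
        using sin_mult_pi_neq_0[OF assms(8,9), of m] \<open>m \<ge> 1\<close> less.prems assms(19) by auto
      ultimately have "\<gamma> = 0"
        using Robin_corner_coeff_eq_0[OF assms(1,3,7,10,11,12,13) _ assms(16) \<open>m \<ge> 1\<close> _ lower \<gamma>]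
        by blast
      then show ?thesis
        using \<gamma> less.prems by simp
    qed
  qed
  then show ?thesis
    unfolding vanishes_to_order_def by blast
qed

end
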